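(* Let $G_1$ and $G_2$ be two vertex-disjoint simple connected graphs with $|V(G_1)|=n_1$, $|V(G_2)|=n_2$, $|E(G_1)|=m_1$, $|E(G_2)|=m_2$. Then the edge R-join $G_1\underline{\vee}_R G_2$ satisfies \[ F(G_1\underline{\vee}_R G_2)=8F(G_1)+F(G_2)+3m_1M_1(G_2)+6m_1^{2}m_2+m_1(n_2+2)^3+n_2m_1^{3}. \]
   Context: For a simple graph $G$ and $v\in V(G)$, $d_G(v)$ is the degree of $v$. The first Zagreb index is $M_1(G)=\sum_{v\in V(G)}d_G(v)^2$ and the F-index is $F(G)=\sum_{v\in V(G)}d_G(v)^3$. The graph $R(G)$ is obtained from $G$ by inserting a new vertex into each edge of $G$ and joining each new vertex to the two end vertices of the corresponding edge (so the original edges of $G$ are kept); let $I(G)$ denote the set of these new vertices, so $V(R(G))=V(G)\cup I(G)$. The edge R-join $G_1\underline{\vee}_R G_2$ is the graph obtained from $R(G_1)$ and $G_2$ (taken vertex-disjoint) by joining each vertex of $I(G_1)$ to every vertex of $G_2$ by an edge. *)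

theory Defs
  imports Main
begin

definition simple_graph :: "'a set \<Rightarrow> 'a set set \<Rightarrow> bool" where
  "simple_graph V E \<longleftrightarrow> finite V \<and> (\<forall>e\<in>E. e \<subseteq> V \<and> card e = 2)"

definition adj_rel :: "'a set set \<Rightarrow> ('a \<times> 'a) set" where
  "adj_rel E = {(x, y). {x, y} \<in> E}"

definition connected_graph :: "'a set \<Rightarrow> 'a set set \<Rightarrow> bool" where
  "connected_graph V E \<longleftrightarrow> V \<noteq> {} \<and> (\<forall>u\<in>V. \<forall>v\<in>V. (u, v) \<in> (adj_rel E)\<^sup>*)"

definition degree :: "'a set set \<Rightarrow> 'a \<Rightarrow> nat" where
  "degree E v = card {e \<in> E. v \<in> e}"

definition zagreb1 :: "'a set \<Rightarrow> 'a set set \<Rightarrow> nat" where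
  "zagreb1 V E = (\<Sum>v\<in>V. degree E v ^ 2)"

definition findex :: "'a set \<Rightarrow> 'a set set \<Rightarrow> nat" where
  "findex V E = (\<Sum>v\<in>V. degree E v ^ 3)"

text \<open>Vertices of the edge R-join: original vertices of G1, the new vertices I(G1)
  (one per edge of G1, labelled by that edge), and vertices of G2. Using a
  datatype makes the three parts vertex-disjoint.\<close>

datatype ('a, 'b) rjv = Old1 'a | Sub "'a set" | Old2 'b

definition rjoin_V :: "'a set \<Rightarrow> 'a set set \<Rightarrow> 'b set \<Rightarrow> ('a, 'b) rjv set" where
  "rjoin_V V1 E1 V2 = Old1 ` V1 \<union> Sub ` E1 \<union> Old2 ` V2"

definition rjoin_E :: "'a set \<Rightarrow> 'a set set \<Rightarrow> 'b set \<Rightarrow> 'b set set \<Rightarrow> ('a, 'b) rjv set set" where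
  "rjoin_E V1 E1 V2 E2 =
     (image Old1) ` E1
     \<union> {{Sub e, Old1 x} | e x. e \<in> E1 \<and> x \<in> e}
     \<union> (image Old2) ` E2
     \<union> {{Sub e, Old2 y} | e y. e \<in> E1 \<and> y \<in> V2}"

end

theory Submission
  imports Defs
begin

text \<open>Every vertex of the edge R-join has a degree determined by its origin: an old vertex
  x of G1 gets 2 d(x) (its edges plus one new vertex per incident edge), a new vertex
  gets n2 + 2, and a vertex y of G2 gets d(y) + m1. Summing cubes over the three parts,
  expanding (d(y) + m1)^3 and using the handshake lemma gives the formula.\<close>

lemma simple_graph_finite_edges:
  assumes "simple_graph V E"
  shows "finite E"
proof -
  have "E \<subseteq> Pow V" and "finite V" using assms by (auto simp: simple_graph_def)
  then show ?thesis by (simp add: finite_subset)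
qed

lemma sum_degree_eq_twice_card_edges:
  assumes "simple_graph V E"
  shows "(\<Sum>v\<in>V. degree E v) = 2 * card E"
proof -
  have fV: "finite V" and edge: "\<And>e. e \<in> E \<Longrightarrow> e \<subseteq> V \<and> card e = 2"
    using assms by (auto simp: simple_graph_def)
  have fE: "finite E" using simple_graph_finite_edges[OF assms] .
  have "(\<Sum>v\<in>V. degree E v) = (\<Sum>v\<in>V. \<Sum>e\<in>E. if v \<in> e then 1 else 0)"
    unfolding degree_def using fE by (simp add: sum.If_cases Int_def conj_commute)
  also have "\<dots> = (\<Sum>e\<in>E. \<Sum>v\<in>V. if v \<in> e then 1 else 0)" by (rule sum.swap)
  also have "\<dots> = (\<Sum>e\<in>E. 2)"
  proof (rule sum.cong)
    fix e assume "e \<in> E"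
    then have "V \<inter> {v. v \<in> e} = e" "card e = 2" using edge by auto
    then show "(\<Sum>v\<in>V. if v \<in> e then 1 else 0) = (2::nat)" using fV by (simp add: sum.If_cases)
  qed simp
  finally show ?thesis by simp
qed

lemma sum_shifted_degree_cube:
  assumes "simple_graph V E"
  shows "(\<Sum>v\<in>V. (degree E v + k) ^ 3)
    = findex V E + 3 * k * zagreb1 V E + 6 * k^2 * card E + card V * k^3"
proof -
  have "(\<Sum>v\<in>V. (degree E v + k) ^ 3)
      = (\<Sum>v\<in>V. degree E v ^ 3 + 3 * k * degree E v ^ 2 + 3 * k^2 * degree E v + k^3)"
    by (rule sum.cong) (simp_all add: power3_eq_cube power2_eq_square algebra_simps)
  also have "\<dots> = findex V E + 3 * k * zagreb1 V E + 3 * k^2 * (\<Sum>v\<in>V. degree E v) + card V * k^3"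
    by (simp add: sum.distrib sum_distrib_left findex_def zagreb1_def)
  finally show ?thesis using sum_degree_eq_twice_card_edges[OF assms] by simp
qed

lemma degree_rjoin_Old1:
  fixes V2 :: "'b set" and x :: 'a
  assumes "finite E1"
  shows "degree (rjoin_E V1 E1 V2 E2) (Old1 x) = 2 * degree E1 x"
proof -
  let ?S = "{e \<in> E1. x \<in> e}"
  let ?old = "image (Old1 :: 'a \<Rightarrow> ('a, 'b) rjv)" and ?new = "\<lambda>e. {Sub e, Old1 x :: ('a, 'b) rjv}"
  have incident: "{f \<in> rjoin_E V1 E1 V2 E2. Old1 x \<in> f} = ?old ` ?S \<union> ?new ` ?S"
    unfolding rjoin_E_def by auto
  have "card (?old ` ?S) = card ?S" by (rule card_image) (simp add: inj_image_eq_iff inj_on_def)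
  moreover have "card (?new ` ?S) = card ?S" by (rule card_image) (auto simp: inj_on_def doubleton_eq_iff)
  moreover have "?old ` ?S \<inter> ?new ` ?S = {}" by auto
  moreover have "finite ?S" using assms by simp
  ultimately show ?thesis
    unfolding degree_def incident by (simp add: card_Un_disjoint)
qed

lemma degree_rjoin_Sub:
  assumes "e \<in> E1" "card e = 2" "finite V2"
  shows "degree (rjoin_E V1 E1 V2 E2) (Sub e) = card V2 + 2"
proof -
  let ?to1 = "\<lambda>x. {Sub e, Old1 x}" and ?to2 = "\<lambda>y. {Sub e, Old2 y}"
  have incident: "{f \<in> rjoin_E V1 E1 V2 E2. Sub e \<in> f} = ?to1 ` e \<union> ?to2 ` V2"
    unfolding rjoin_E_def using assms(1) by auto
  have "finite e" using assms(2) card.infinite by fastforce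
  moreover have "card (?to1 ` e) = card e" by (rule card_image) (auto simp: inj_on_def doubleton_eq_iff)
  moreover have "card (?to2 ` V2) = card V2" by (rule card_image) (auto simp: inj_on_def doubleton_eq_iff)
  moreover have "?to1 ` e \<inter> ?to2 ` V2 = {}" by (auto simp: doubleton_eq_iff)
  ultimately show ?thesis
    unfolding degree_def incident using assms(2,3) by (simp add: card_Un_disjoint)
qed

lemma degree_rjoin_Old2:
  assumes "y \<in> V2" "finite E1" "finite E2"
  shows "degree (rjoin_E V1 E1 V2 E2) (Old2 y) = degree E2 y + card E1"
proof -
  let ?S = "{e \<in> E2. y \<in> e}" and ?new = "\<lambda>e. {Sub e, Old2 y}"
  have incident: "{f \<in> rjoin_E V1 E1 V2 E2. Old2 y \<in> f} = image Old2 ` ?S \<union> ?new ` E1"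
    unfolding rjoin_E_def using assms(1) by auto
  have "card (image Old2 ` ?S) = card ?S" by (rule card_image) (simp add: inj_image_eq_iff inj_on_def)
  moreover have "card (?new ` E1) = card E1" by (rule card_image) (auto simp: inj_on_def doubleton_eq_iff)
  moreover have "image Old2 ` ?S \<inter> ?new ` E1 = {}" by auto
  moreover have "finite ?S" using assms(3) by simp
  ultimately show ?thesis
    unfolding degree_def incident using assms(2) by (simp add: card_Un_disjoint)
qed

lemma sum_rjoin_V:
  assumes "finite V1" "finite E1" "finite V2"
  shows "(\<Sum>v\<in>rjoin_V V1 E1 V2. f v)
    = (\<Sum>x\<in>V1. f (Old1 x)) + (\<Sum>e\<in>E1. f (Sub e)) + (\<Sum>y\<in>V2. f (Old2 y))"
  unfolding rjoin_V_def using assms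
  by (subst sum.union_disjoint; auto simp: sum.reindex inj_on_def)+

theorem theorem4:
  fixes V1 :: "'a set" and E1 :: "'a set set" and V2 :: "'b set" and E2 :: "'b set set"
  assumes "simple_graph V1 E1" and "connected_graph V1 E1"
    and "simple_graph V2 E2" and "connected_graph V2 E2"
    and "n1 = card V1" and "n2 = card V2" and "m1 = card E1" and "m2 = card E2"
  shows "findex (rjoin_V V1 E1 V2) (rjoin_E V1 E1 V2 E2)
    = 8 * findex V1 E1 + findex V2 E2 + 3 * m1 * zagreb1 V2 E2 + 6 * m1^2 * m2
      + m1 * (n2 + 2)^3 + n2 * m1^3"
proof -
  let ?d = "degree (rjoin_E V1 E1 V2 E2)"
  have fV1: "finite V1" and fV2: "finite V2" and edge1: "\<And>e. e \<in> E1 \<Longrightarrow> card e = 2"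
    using assms(1,3) by (auto simp: simple_graph_def)
  have fE1: "finite E1" and fE2: "finite E2"
    using assms(1,3) by (simp_all add: simple_graph_finite_edges)
  have "(\<Sum>x\<in>V1. ?d (Old1 x) ^ 3) = 8 * findex V1 E1"
    by (simp add: findex_def sum_distrib_left degree_rjoin_Old1[OF fE1] power_mult_distrib)
  moreover have "(\<Sum>e\<in>E1. ?d (Sub e) ^ 3) = m1 * (n2 + 2)^3"
    by (simp add: degree_rjoin_Sub[OF _ edge1 fV2] assms(6,7))
  moreover have "(\<Sum>y\<in>V2. ?d (Old2 y) ^ 3)
      = findex V2 E2 + 3 * m1 * zagreb1 V2 E2 + 6 * m1^2 * m2 + n2 * m1^3"
    using sum_shifted_degree_cube[OF assms(3), of m1]
    by (simp add: degree_rjoin_Old2[OF _ fE1 fE2] assms(6-8))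
  ultimately show ?thesis
    unfolding findex_def sum_rjoin_V[OF fV1 fE1 fV2] by (simp add: findex_def)
qed

end
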